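(* Let $L$ be a finite distributive lattice, let $m$ be the maximum size of an antichain in $\operatorname{Mi}(L)$, and put $Q_L(x)=\sum_{k=0}^m q_k(L)x^k$ and $D_L^-(x)=\sum_{k=0}^m d_k^-(L)x^k$. Then $$Q_L(-1)=q_0(L)-q_1(L)+q_2(L)-q_3(L)+\cdots=D_L^-(0)=1,$$ and $$\left.\frac{\mathrm{d}Q_L(x)}{\mathrm{d}x}\right|_{x=-1}=\left.\frac{\mathrm{d}D_L^-(x)}{\mathrm{d}x}\right|_{x=0}=d_1^-(L)=|\operatorname{Mi}(L)|.$$
   Context: $\operatorname{Mi}(L)$ is the set of meet-irreducible elements of $L$, as a poset under the order of $L$. For a finite lattice $M$ and $k\ge0$, $q_k(M)$ is the number of convex sublattices (intervals) of $M$ isomorphic to the Boolean lattice $\mathbf{B}_k$ with $2^k$ elements. For $a\in M$, $\deg^-_M(a)$ is the number of elements of $M$ covering $a$, and $d_k^-(M)$ is the number of $a\in M$ with $\deg^-_M(a)=k$. *)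

theory Defs
  imports "HOL-Computational_Algebra.Polynomial"
begin

definition meet_irreducible :: "'a::lattice \<Rightarrow> bool" where
  "meet_irreducible a \<longleftrightarrow> (\<exists>b. \<not> b \<le> a) \<and> (\<forall>x y. a = inf x y \<longrightarrow> a = x \<or> a = y)"

definition Mi :: "'a::lattice set" where
  "Mi = {a. meet_irreducible a}"

definition antichain_in :: "'a::order set \<Rightarrow> bool" where
  "antichain_in A \<longleftrightarrow> (\<forall>x\<in>A. \<forall>y\<in>A. x \<le> y \<longrightarrow> x = y)"

definition max_antichain_Mi :: "'a::{finite,lattice} itself \<Rightarrow> nat" where
  "max_antichain_Mi _ = Max {card A | A :: 'a set. A \<subseteq> Mi \<and> antichain_in A}"

definition iso_boolean :: "'a::order set \<Rightarrow> nat \<Rightarrow> bool" where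
  "iso_boolean S k \<longleftrightarrow> (\<exists>f. bij_betw f S (Pow {..<k}) \<and>
      (\<forall>x\<in>S. \<forall>y\<in>S. x \<le> y \<longleftrightarrow> f x \<subseteq> f y))"

definition q :: "'a::{finite,lattice} itself \<Rightarrow> nat \<Rightarrow> nat" where
  "q _ k = card {S :: 'a set. (\<exists>a b. a \<le> b \<and> S = {a..b}) \<and> iso_boolean S k}"

definition covers :: "'a::order \<Rightarrow> 'a \<Rightarrow> bool" where
  "covers a b \<longleftrightarrow> a < b \<and> \<not> (\<exists>c. a < c \<and> c < b)"   (* b covers a *)

definition deg_down :: "'a::{finite,order} \<Rightarrow> nat" where
  "deg_down a = card {b. covers a b}"

definition d_down :: "'a::{finite,order} itself \<Rightarrow> nat \<Rightarrow> nat" where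
  "d_down _ k = card {a :: 'a. deg_down a = k}"

definition Q_poly :: "'a::{finite,lattice} itself \<Rightarrow> int poly" where
  "Q_poly L = (\<Sum>k\<le>max_antichain_Mi L. monom (int (q L k)) k)"

definition D_poly :: "'a::{finite,lattice} itself \<Rightarrow> int poly" where
  "D_poly L = (\<Sum>k\<le>max_antichain_Mi L. monom (int (d_down L k)) k)"

end

theory Submission
  imports Defs
begin

(* In a finite distributive lattice the intervals isomorphic to B_k are exactly the
   intervals [a, a \<squnion> \<Squnion>T] with T a k-element set of upper covers of a. Hence
   q_k(L) = \<Sum>\<^sub>a C(deg\<^sup>- a, k), which says Q_L(x) = D\<^sup>-_L(1 + x); evaluating at x = -1 and
   using the chain rule reduces everything to D\<^sup>-_L(0) = d_0 and (D\<^sup>-_L)'(0) = d_1. Only the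
   top element has no upper cover, and the elements with exactly one upper cover are the
   meet-irreducibles. The truncation of both sums at m is harmless because every a has at
   most m upper covers: for each cover c of a pick m_c maximal among the elements above a
   but not above c; the m_c are meet-irreducible and, by distributivity, pairwise incomparable. *)

section \<open>Upper covers and meet-irreducible elements\<close>

abbreviation upper_covers :: "'a::order \<Rightarrow> 'a set" where
  "upper_covers a \<equiv> {b. covers a b}"

lemma covers_inf_eq_or_le:
  fixes a :: "'a::lattice"
  assumes c: "covers a c" and x: "a \<le> x"
  shows "inf x c = a \<or> c \<le> x"
proof -
  have "c \<le> x" if ne: "inf x c \<noteq> a"
  proof -
    have "a \<le> inf x c" using x less_imp_le[of a c] c unfolding covers_def by simp
    then have "a < inf x c" using ne by (auto simp: less_le)
    then have "inf x c = c"
      using c inf_le2[of x c] unfolding covers_def by (blast intro: order.not_eq_order_implies_strict)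
    then show "c \<le> x" using inf_le1[of x c] by simp
  qed
  then show ?thesis by blast
qed

lemma inf_distinct_covers:
  fixes a :: "'a::lattice"
  assumes c: "covers a c" and c': "covers a c'" and "c \<noteq> c'"
  shows "inf c c' = a"
proof -
  have "\<not> c' \<le> c" using assms unfolding covers_def by (auto simp: order.order_iff_strict)
  moreover have "a \<le> c" using c unfolding covers_def by (simp add: order.strict_implies_order)
  ultimately show ?thesis using covers_inf_eq_or_le[OF c'] by blast
qed

lemma ex_covers_le:
  fixes a :: "'a::{finite,order}"
  assumes "a < x"
  obtains c where "covers a c" "c \<le> x"
proof -
  have "finite {z. a < z \<and> z \<le> x}" "{z. a < z \<and> z \<le> x} \<noteq> {}" using assms by auto
  from finite_has_minimal[OF this] obtain c where c: "a < c" "c \<le> x"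
    and min: "\<And>z. a < z \<Longrightarrow> z \<le> x \<Longrightarrow> z \<le> c \<Longrightarrow> z = c"
    by blast
  have "\<not> (a < z \<and> z < c)" for z
  proof
    assume z: "a < z \<and> z < c"
    then have "z \<le> c" using order.strict_implies_order by blast
    then have "z = c" using min c(2) z order.trans by blast
    then show False using z by simp
  qed
  then have "covers a c" unfolding covers_def using c(1) by blast
  then show thesis using that c(2) by blast
qed

lemma upper_covers_empty_iff:
  fixes a :: "'a::{finite,lattice}"
  shows "upper_covers a = {} \<longleftrightarrow> (\<forall>x. x \<le> a)"
proof
  assume none: "upper_covers a = {}"
  show "\<forall>x. x \<le> a"
  proof (rule ccontr)
    assume "\<not> (\<forall>x. x \<le> a)"
    then obtain x where "\<not> x \<le> a" by blast
    then have "a \<noteq> sup a x" by (metis sup.cobounded2)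
    then have "a < sup a x" by (simp add: order.strict_iff_order)
    then show False using none by (auto elim: ex_covers_le)
  qed
next
  assume "\<forall>x. x \<le> a"
  then show "upper_covers a = {}" unfolding covers_def by (auto simp: less_le_not_le)
qed

lemma d_down_0:
  fixes L :: "'a::{finite,lattice} itself"
  shows "d_down L 0 = 1"
proof -
  have "deg_down a = 0 \<longleftrightarrow> a = Sup_fin UNIV" for a :: 'a
  proof -
    have "deg_down a = 0 \<longleftrightarrow> upper_covers a = {}" unfolding deg_down_def by simp
    also have "\<dots> \<longleftrightarrow> a = Sup_fin UNIV"
      unfolding upper_covers_empty_iff using Sup_fin.coboundedI[OF finite UNIV_I]
      by (auto intro: order.antisym)
    finally show ?thesis .
  qed
  then have "{a::'a. deg_down a = 0} = {Sup_fin UNIV}" by auto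
  then show ?thesis unfolding d_down_def by simp
qed

lemma meet_irreducible_iff_deg_down_1:
  fixes a :: "'a::{finite,lattice}"
  shows "meet_irreducible a \<longleftrightarrow> deg_down a = 1"
proof
  assume mi: "meet_irreducible a"
  then have "\<not> (\<forall>x. x \<le> a)" unfolding meet_irreducible_def by blast
  then obtain c where c: "covers a c" using upper_covers_empty_iff[of a] by blast
  have "c' = c" if c': "covers a c'" for c'
  proof (rule ccontr)
    assume "c' \<noteq> c"
    then have "a = inf c c'" using inf_distinct_covers c c' by metis
    then have "a = c \<or> a = c'" using mi unfolding meet_irreducible_def by blast
    then show False using c c' unfolding covers_def by blast
  qed
  then have "upper_covers a = {c}" using c by blast
  then show "deg_down a = 1" unfolding deg_down_def by simp
next
  assume "deg_down a = 1"
  then obtain c where only_c: "upper_covers a = {c}"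
    unfolding deg_down_def by (auto simp: card_1_singleton_iff)
  then have c: "covers a c" by blast
  have c_le: "c \<le> x" if ax: "a < x" for x
  proof -
    obtain c' where "covers a c'" "c' \<le> x" using ex_covers_le[OF ax] by blast
    moreover have "c' = c" using only_c \<open>covers a c'\<close> by (metis mem_Collect_eq singletonD)
    ultimately show ?thesis by simp
  qed
  show "meet_irreducible a" unfolding meet_irreducible_def
  proof (intro conjI allI impI)
    show "\<exists>b. \<not> b \<le> a" using c unfolding covers_def by (auto simp: less_le_not_le)
    fix x y assume xy: "a = inf x y"
    show "a = x \<or> a = y"
    proof (rule ccontr)
      assume ne: "\<not> (a = x \<or> a = y)"
      have "a \<le> x" "a \<le> y" using xy by simp_all
      then have "a < x" "a < y" using ne by (auto simp: less_le)
      then have "c \<le> inf x y" using c_le by simp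
      then show False using xy c unfolding covers_def by (auto simp: less_le_not_le)
    qed
  qed
qed

lemma d_down_1_eq_card_Mi:
  fixes L :: "'a::{finite,lattice} itself"
  shows "d_down L 1 = card (Mi :: 'a set)"
  unfolding d_down_def Mi_def using meet_irreducible_iff_deg_down_1 by metis

section \<open>Boolean intervals\<close>

(* Inserting a keeps the argument of Sup_fin nonempty, so join_with a {} = a. *)
definition join_with :: "'a::lattice \<Rightarrow> 'a set \<Rightarrow> 'a" where
  "join_with a T = Sup_fin (insert a T)"

lemma join_with_upper:
  fixes a :: "'a::{finite,lattice}"
  shows "a \<le> join_with a T" and "t \<in> T \<Longrightarrow> t \<le> join_with a T"
  unfolding join_with_def by (auto intro: Sup_fin.coboundedI)

lemma join_with_least:
  fixes a :: "'a::{finite,lattice}"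
  shows "a \<le> b \<Longrightarrow> (\<And>t. t \<in> T \<Longrightarrow> t \<le> b) \<Longrightarrow> join_with a T \<le> b"
  unfolding join_with_def by (auto intro: Sup_fin.boundedI)

lemma join_with_mono:
  fixes a :: "'a::{finite,lattice}"
  shows "T \<subseteq> T' \<Longrightarrow> join_with a T \<le> join_with a T'"
  by (rule join_with_least) (auto intro: join_with_upper)

lemma inf_join_with:
  fixes a :: "'a::{finite,distrib_lattice}"
  shows "inf x (join_with a T) = join_with (inf x a) (inf x ` T)"
  unfolding join_with_def inf_Sup1_distrib[OF finite insert_not_empty] Setcompr_eq_image image_insert ..

lemma covers_le_join_with:
  fixes a :: "'a::{finite,distrib_lattice}"
  assumes T: "T \<subseteq> upper_covers a"
  shows "{c. covers a c \<and> c \<le> join_with a T} = T"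
proof
  show "T \<subseteq> {c. covers a c \<and> c \<le> join_with a T}" using T by (auto intro: join_with_upper)
  show "{c. covers a c \<and> c \<le> join_with a T} \<subseteq> T"
  proof (rule ccontr)
    assume "\<not> ?thesis"
    then obtain c where c: "covers a c" "c \<le> join_with a T" "c \<notin> T" by auto
    have "inf c a = a" using c unfolding covers_def by (auto simp: inf.absorb2)
    moreover have "insert a (inf c ` T) = {a}" using inf_distinct_covers[of a c] c T by auto
    ultimately have "join_with (inf c a) (inf c ` T) = a"
      unfolding join_with_def by (simp only: Sup_fin.singleton)
    moreover have "c = inf c (join_with a T)" using c by (simp add: inf.absorb1)
    ultimately show False using c inf_join_with[of c a T] unfolding covers_def by auto
  qed
qed

lemma join_with_covers_le:
  fixes a :: "'a::{finite,distrib_lattice}"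
  assumes T: "T \<subseteq> upper_covers a" and x: "a \<le> x" "x \<le> join_with a T"
  shows "join_with a {c\<in>T. c \<le> x} = x"
proof -
  have "inf x c \<in> insert a {c\<in>T. c \<le> x}" if "c \<in> T" for c
  proof -
    have "covers a c" using that T by auto
    then show ?thesis using covers_inf_eq_or_le[of a c x] that x(1) by (auto simp: inf.absorb2)
  qed
  moreover have "c \<in> inf x ` T" if "c \<in> T" "c \<le> x" for c
    using that by (metis image_eqI inf.absorb2)
  ultimately have "insert a (inf x ` T) = insert a {c\<in>T. c \<le> x}" by blast
  then have "join_with a {c\<in>T. c \<le> x} = join_with (inf x a) (inf x ` T)"
    unfolding join_with_def using x(1) by (simp add: inf.absorb2)
  also have "\<dots> = x" using inf_join_with[of x a T] x(2) by (simp add: inf.absorb1)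
  finally show ?thesis .
qed

lemma iso_boolean_of_order_iso_Pow:
  fixes S :: "'a::order set"
  assumes T: "finite T" and g: "bij_betw g S (Pow T)"
    and g_order: "\<And>x y. x \<in> S \<Longrightarrow> y \<in> S \<Longrightarrow> x \<le> y \<longleftrightarrow> g x \<subseteq> g y"
  shows "iso_boolean S (card T)"
proof -
  obtain h where h: "bij_betw h T {..<card T}"
    using ex_bij_betw_finite_nat[OF T] by (auto simp: atLeast0LessThan)
  have "bij_betw (image h \<circ> g) S (Pow {..<card T})"
    using bij_betw_trans[OF g bij_betw_Pow[OF h]] .
  moreover have "x \<le> y \<longleftrightarrow> (image h \<circ> g) x \<subseteq> (image h \<circ> g) y" if "x \<in> S" "y \<in> S" for x y
  proof -
    have "g x \<subseteq> T" "g y \<subseteq> T" using g that by (auto simp: bij_betw_def)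
    moreover have "inj_on h T" using h by (rule bij_betw_imp_inj_on)
    ultimately have "h ` g x \<subseteq> h ` g y \<longleftrightarrow> g x \<subseteq> g y"
      using inj_on_image_mem_iff[of h T] by (meson image_mono subset_iff)
    then show ?thesis using g_order[OF that] by simp
  qed
  ultimately show ?thesis unfolding iso_boolean_def by blast
qed

lemma iso_boolean_Icc_join_with:
  fixes a :: "'a::{finite,distrib_lattice}"
  assumes T: "T \<subseteq> upper_covers a"
  shows "iso_boolean {a..join_with a T} (card T)"
proof (rule iso_boolean_of_order_iso_Pow)
  let ?g = "\<lambda>x. {c\<in>T. c \<le> x}"
  have recover: "join_with a (?g x) = x" if "x \<in> {a..join_with a T}" for x
    using join_with_covers_le[OF T] that by simp
  show "bij_betw ?g {a..join_with a T} (Pow T)"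
  proof (rule bij_betw_imageI)
    show "inj_on ?g {a..join_with a T}" by (intro inj_onI) (metis recover)
    show "?g ` {a..join_with a T} = Pow T"
    proof
      show "?g ` {a..join_with a T} \<subseteq> Pow T" by auto
      show "Pow T \<subseteq> ?g ` {a..join_with a T}"
      proof
        fix T' assume "T' \<in> Pow T"
        then have "T' = ?g (join_with a T')" "join_with a T' \<in> {a..join_with a T}"
          using covers_le_join_with[of T' a] T by (auto intro: join_with_upper join_with_mono)
        then show "T' \<in> ?g ` {a..join_with a T}" by (rule image_eqI)
      qed
    qed
  qed
  show "x \<le> y \<longleftrightarrow> ?g x \<subseteq> ?g y" if "x \<in> {a..join_with a T}" "y \<in> {a..join_with a T}" for x y
    using join_with_mono[of "?g x" "?g y" a] recover[OF that(1)] recover[OF that(2)] by auto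
qed simp

context
  fixes a b :: "'a::{finite,lattice}" and k :: nat and f :: "'a \<Rightarrow> nat set"
  assumes a_le_b: "a \<le> b"
    and f_bij: "bij_betw f {a..b} (Pow {..<k})"
    and f_order: "\<And>x y. x \<in> {a..b} \<Longrightarrow> y \<in> {a..b} \<Longrightarrow> x \<le> y \<longleftrightarrow> f x \<subseteq> f y"
begin

private lemma f_eq_iff: "x \<in> {a..b} \<Longrightarrow> y \<in> {a..b} \<Longrightarrow> f x = f y \<longleftrightarrow> x = y"
  using f_order by (metis order.antisym order.refl)

private lemma f_onto: "U \<subseteq> {..<k} \<Longrightarrow> \<exists>x\<in>{a..b}. f x = U"
  using f_bij unfolding bij_betw_def by (metis Pow_iff imageE)

private lemma f_range: "x \<in> {a..b} \<Longrightarrow> f x \<subseteq> {..<k}"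
  using f_bij unfolding bij_betw_def by auto

lemma boolean_interval_bot: "f a = {}"
proof -
  obtain x where "x \<in> {a..b}" "f x = {}" using f_onto[of "{}"] by auto
  then show ?thesis using f_order[of a x] a_le_b by auto
qed

lemma boolean_interval_covers_bot_iff:
  assumes c: "c \<in> {a..b}"
  shows "covers a c \<longleftrightarrow> (\<exists>i<k. f c = {i})"
proof
  assume cov: "covers a c"
  then have "f c \<noteq> {}" using f_eq_iff[OF c, of a] a_le_b boolean_interval_bot
    unfolding covers_def by auto
  then obtain i where i: "i \<in> f c" "i < k" using f_range[OF c] by auto
  then obtain y where y: "y \<in> {a..b}" "f y = {i}" using f_onto[of "{i}"] by auto
  then have "y \<le> c" "y \<noteq> a" using f_order[OF y(1) c] i boolean_interval_bot by auto
  then have "y = c" using cov y(1) unfolding covers_def by (auto simp: order.order_iff_strict)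
  then show "\<exists>i<k. f c = {i}" using y i by auto
next
  assume "\<exists>i<k. f c = {i}"
  then obtain i where i: "f c = {i}" by auto
  have "a \<noteq> c" using i boolean_interval_bot by auto
  moreover have "False" if z: "a < z" "z < c" for z
  proof -
    have zS: "z \<in> {a..b}" using z c by auto
    then have "f z \<subseteq> f c" "f z \<noteq> f c" using f_order[OF zS c] f_eq_iff[OF zS c] z by auto
    then have "f z = f a" using i boolean_interval_bot by auto
    then show False using f_eq_iff[OF zS, of a] a_le_b z by auto
  qed
  ultimately show "covers a c" using c unfolding covers_def by auto
qed

lemma card_boolean_interval_covers: "card {c. covers a c \<and> c \<le> b} = k"
proof -
  let ?T = "{c. covers a c \<and> c \<le> b}"
  have T_sub: "?T \<subseteq> {a..b}" unfolding covers_def by auto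
  have "f ` ?T = (\<lambda>i. {i}) ` {..<k}"
  proof
    show "f ` ?T \<subseteq> (\<lambda>i. {i}) ` {..<k}"
      using boolean_interval_covers_bot_iff T_sub by blast
    show "(\<lambda>i. {i}) ` {..<k} \<subseteq> f ` ?T"
    proof
      fix U assume "U \<in> (\<lambda>i. {i}) ` {..<k}"
      then obtain i where i: "i < k" "U = {i}" by auto
      then obtain y where "y \<in> {a..b}" "f y = U" using f_onto[of U] by auto
      then show "U \<in> f ` ?T" using boolean_interval_covers_bot_iff i by auto
    qed
  qed
  moreover have "inj_on f ?T" using inj_on_subset[OF bij_betw_imp_inj_on[OF f_bij] T_sub] .
  ultimately have "card ?T = card ((\<lambda>i. {i}) ` {..<k})" by (metis card_image)
  also have "\<dots> = k" by (subst card_image) auto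
  finally show ?thesis .
qed

lemma boolean_interval_top_eq_join_with: "join_with a {c. covers a c \<and> c \<le> b} = b"
proof -
  let ?J = "join_with a {c. covers a c \<and> c \<le> b}"
  have J: "?J \<in> {a..b}" using a_le_b by (auto intro: join_with_upper join_with_least)
  have "i \<in> f ?J" if ik: "i < k" for i
  proof -
    obtain c where c: "c \<in> {a..b}" "f c = {i}" using f_onto[of "{i}"] ik by auto
    then have "covers a c" using boolean_interval_covers_bot_iff ik by auto
    then have "c \<le> ?J" using c by (auto intro: join_with_upper)
    then show ?thesis using f_order[OF c(1) J] c by auto
  qed
  then have "f b \<subseteq> f ?J" using f_range[of b] a_le_b by auto
  then show ?thesis using f_order[of b ?J] J a_le_b by (auto intro: order.antisym)
qed

end

lemma iso_boolean_Icc_covers: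
  fixes a :: "'a::{finite,lattice}"
  assumes a_le_b: "a \<le> b" and iso: "iso_boolean {a..b} k"
  shows "card {c. covers a c \<and> c \<le> b} = k" and "join_with a {c. covers a c \<and> c \<le> b} = b"
proof -
  obtain f where f_bij: "bij_betw f {a..b} (Pow {..<k})"
    and f_order: "\<And>x y. x \<in> {a..b} \<Longrightarrow> y \<in> {a..b} \<Longrightarrow> x \<le> y \<longleftrightarrow> f x \<subseteq> f y"
    using iso unfolding iso_boolean_def by blast
  show "card {c. covers a c \<and> c \<le> b} = k"
    using card_boolean_interval_covers[OF a_le_b f_bij f_order] .
  show "join_with a {c. covers a c \<and> c \<le> b} = b"
    using boolean_interval_top_eq_join_with[OF a_le_b f_bij f_order] .
qed

lemma q_eq_sum_choose_deg_down:
  fixes L :: "'a::{finite,distrib_lattice} itself"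
  shows "q L k = (\<Sum>a\<in>(UNIV :: 'a set). deg_down a choose k)"
proof -
  let ?P = "SIGMA a:(UNIV :: 'a set). {T. T \<subseteq> upper_covers a \<and> card T = k}"
  let ?I = "\<lambda>(a, T). {a..join_with a T}"
  have "bij_betw ?I ?P {S. (\<exists>a b. a \<le> b \<and> S = {a..b}) \<and> iso_boolean S k}"
  proof (rule bij_betw_imageI)
    show "inj_on ?I ?P"
    proof (rule inj_onI)
      fix p p' assume "p \<in> ?P" "p' \<in> ?P" and eq: "?I p = ?I p'"
      then obtain a T a' T' where p: "p = (a, T)" "T \<subseteq> upper_covers a"
        and p': "p' = (a', T')" "T' \<subseteq> upper_covers a'" by auto
      have "{a..join_with a T} = {a'..join_with a' T'}" using eq unfolding p p' by (simp only: prod.case)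
      then have a_eq: "a = a'" and join_eq: "join_with a T = join_with a' T'"
        unfolding Icc_eq_Icc using join_with_upper(1)[of a T] by blast+
      have "T = {c. covers a c \<and> c \<le> join_with a T}" using covers_le_join_with[OF p(2)] by simp
      also have "\<dots> = {c. covers a' c \<and> c \<le> join_with a' T'}" unfolding join_eq by (simp only: a_eq)
      also have "\<dots> = T'" using covers_le_join_with[OF p'(2)] .
      finally show "p = p'" using a_eq p p' by simp
    qed
    show "?I ` ?P = {S. (\<exists>a b. a \<le> b \<and> S = {a..b}) \<and> iso_boolean S k}"
    proof (intro equalityI subsetI)
      fix S :: "'a set" assume "S \<in> ?I ` ?P"
      then obtain a T where T: "T \<subseteq> upper_covers a" "card T = k" and S: "S = {a..join_with a T}"
        by auto
      then show "S \<in> {S. (\<exists>a b. a \<le> b \<and> S = {a..b}) \<and> iso_boolean S k}"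
        using iso_boolean_Icc_join_with[OF T(1)] join_with_upper(1)[of a T] by blast
    next
      fix S :: "'a set" assume "S \<in> {S. (\<exists>a b. a \<le> b \<and> S = {a..b}) \<and> iso_boolean S k}"
      then obtain a b where ab: "a \<le> b" "S = {a..b}" "iso_boolean {a..b} k" by blast
      let ?T = "{c. covers a c \<and> c \<le> b}"
      have "(a, ?T) \<in> ?P" "S = ?I (a, ?T)" using iso_boolean_Icc_covers[OF ab(1,3)] ab(2) by auto
      then show "S \<in> ?I ` ?P" by blast
    qed
  qed
  then have "q L k = card ?P" unfolding q_def by (simp add: bij_betw_same_card)
  also have "\<dots> = (\<Sum>a\<in>(UNIV :: 'a set). card {T. T \<subseteq> upper_covers a \<and> card T = k})" by simp
  also have "\<dots> = (\<Sum>a\<in>(UNIV :: 'a set). deg_down a choose k)" by (simp add: deg_down_def n_subsets)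
  finally show ?thesis .
qed

section \<open>A bound on the number of upper covers\<close>

lemma meet_irreducible_if_maximal_not_above:
  fixes m :: "'a::lattice"
  assumes not_above: "\<not> c \<le> m" and maximal: "\<And>y. m < y \<Longrightarrow> c \<le> y"
  shows "meet_irreducible m"
  unfolding meet_irreducible_def
proof (intro conjI allI impI)
  show "\<exists>b. \<not> b \<le> m" using not_above by auto
  fix x y assume m: "m = inf x y"
  show "m = x \<or> m = y"
  proof (rule ccontr)
    assume "\<not> (m = x \<or> m = y)"
    then have "c \<le> x" "c \<le> y" using maximal m by (auto simp: order.strict_iff_order)
    then show False using not_above m by simp
  qed
qed

lemma cover_le_maximal_not_above_other_cover:
  fixes a :: "'a::distrib_lattice"
  assumes c: "covers a c" and c': "covers a c'" "c \<noteq> c'"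
    and m: "a \<le> m" "\<not> c \<le> m" and maximal: "\<And>y. m < y \<Longrightarrow> c \<le> y"
  shows "c' \<le> m"
proof (cases "c \<le> sup m c'")
  case True
  have "inf c m = a" using covers_inf_eq_or_le[OF c m(1)] m(2) by (simp add: inf_commute)
  moreover have "inf c c' = a" using inf_distinct_covers c c' by blast
  ultimately have "c = sup a a" using True inf_sup_distrib1[of c m c'] by (simp add: inf.absorb1)
  then show ?thesis using c unfolding covers_def by simp
next
  case False
  then have "\<not> m < sup m c'" using maximal by blast
  then have "sup m c' = m" by (simp add: less_le)
  then show ?thesis by (simp add: sup.absorb_iff1)
qed

lemma ex_Mi_antichain_card_deg_down:
  fixes a :: "'a::{finite,distrib_lattice}"
  obtains A :: "'a set" where "A \<subseteq> Mi" "antichain_in A" "card A = deg_down a"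
proof -
  have "\<exists>m. a \<le> m \<and> \<not> c \<le> m \<and> (\<forall>y. m < y \<longrightarrow> c \<le> y)" if "covers a c" for c
  proof -
    have "a \<in> {x. \<not> c \<le> x}" using that unfolding covers_def by (auto simp: less_le_not_le)
    then show ?thesis using finite_has_maximal2[of "{x. \<not> c \<le> x}" a]
      by (auto simp: order.strict_iff_order)
  qed
  then obtain m where m: "\<And>c. covers a c \<Longrightarrow> a \<le> m c \<and> \<not> c \<le> m c \<and> (\<forall>y. m c < y \<longrightarrow> c \<le> y)"
    by metis
  have cross: "c' \<le> m c" if "covers a c" "covers a c'" "c \<noteq> c'" for c c'
    using cover_le_maximal_not_above_other_cover[OF that] m[OF that(1)] by blast
  have "m c \<le> m c' \<Longrightarrow> c = c'" if "covers a c" "covers a c'" for c c'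
    using cross[OF that] m[OF that(2)] order.trans by blast
  then have "inj_on m (upper_covers a)" "antichain_in (m ` upper_covers a)"
    unfolding antichain_in_def by (auto intro: inj_onI)
  moreover have "m ` upper_covers a \<subseteq> Mi"
    unfolding Mi_def using m meet_irreducible_if_maximal_not_above by blast
  ultimately show thesis using that[of "m ` upper_covers a"] unfolding deg_down_def
    by (simp add: card_image)
qed

lemma card_le_max_antichain_Mi:
  fixes L :: "'a::{finite,lattice} itself" and A :: "'a set"
  assumes "A \<subseteq> Mi" "antichain_in A"
  shows "card A \<le> max_antichain_Mi L"
  unfolding max_antichain_Mi_def using assms
  by (intro Max_ge) (auto intro: finite_subset[of _ "card ` UNIV"])

lemma deg_down_le_max_antichain_Mi:
  fixes L :: "'a::{finite,distrib_lattice} itself" and a :: 'a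
  shows "deg_down a \<le> max_antichain_Mi L"
proof -
  obtain A :: "'a set" where "A \<subseteq> Mi" "antichain_in A" "card A = deg_down a"
    by (rule ex_Mi_antichain_card_deg_down)
  then show ?thesis using card_le_max_antichain_Mi[of A L] by simp
qed

section \<open>The polynomials Q_L and D_L\<close>

lemma coeff_sum_monom_atMost:
  "coeff (\<Sum>i\<le>d. monom (f i) i) n = (if n \<le> d then f n else 0)"
  by (simp add: coeff_sum_monom coeff_sum)

lemma coeff_one_plus_X_power:
  "coeff ([:1, 1:] ^ d) n = (of_nat (d choose n) :: 'a::comm_semiring_1)"
proof (cases "n \<le> d")
  case True
  then show ?thesis by (simp add: coeff_linear_poly_power)
next
  case False
  then have "d < n" by simp
  moreover have "degree ([:1, 1:] ^ d :: 'a poly) \<le> d"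
    using degree_power_le[of "[:1, 1:] :: 'a poly" d] by simp
  ultimately have "coeff ([:1, 1:] ^ d :: 'a poly) n = 0" by (simp add: coeff_eq_0)
  with \<open>d < n\<close> show ?thesis by (simp add: binomial_eq_0)
qed

lemma pcompose_monom_1: "pcompose (monom 1 k) q = q ^ k"
  for q :: "'a::comm_semiring_1 poly"
  by (induction k) (simp_all add: monom_altdef pcompose_mult pcompose_pCons)

lemma coeff_D_poly:
  fixes L :: "'a::{finite,distrib_lattice} itself"
  shows "coeff (D_poly L) n = int (d_down L n)"
proof -
  have "d_down L n = 0" if "max_antichain_Mi L < n"
  proof -
    have "deg_down a \<noteq> n" for a :: 'a using deg_down_le_max_antichain_Mi[of a L] that by linarith
    then show ?thesis unfolding d_down_def by simp
  qed
  then show ?thesis unfolding D_poly_def coeff_sum_monom_atMost by auto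
qed

lemma coeff_Q_poly:
  fixes L :: "'a::{finite,distrib_lattice} itself"
  shows "coeff (Q_poly L) n = int (q L n)"
proof -
  have "q L n = 0" if "max_antichain_Mi L < n"
  proof -
    have "deg_down a < n" for a :: 'a using deg_down_le_max_antichain_Mi[of a L] that by linarith
    then show ?thesis unfolding q_eq_sum_choose_deg_down by (simp add: binomial_eq_0)
  qed
  then show ?thesis unfolding Q_poly_def coeff_sum_monom_atMost by auto
qed

lemma D_poly_eq_sum_monom:
  fixes L :: "'a::{finite,distrib_lattice} itself"
  shows "D_poly L = (\<Sum>a\<in>(UNIV :: 'a set). monom 1 (deg_down a))"
  by (simp add: poly_eq_iff coeff_D_poly coeff_sum d_down_def sum.If_cases)

lemma Q_poly_eq_sum_power:
  fixes L :: "'a::{finite,distrib_lattice} itself"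
  shows "Q_poly L = (\<Sum>a\<in>(UNIV :: 'a set). [:1, 1:] ^ deg_down a)"
  by (simp add: poly_eq_iff coeff_Q_poly coeff_sum coeff_one_plus_X_power q_eq_sum_choose_deg_down)

lemma Q_poly_eq_pcompose_D_poly:
  fixes L :: "'a::{finite,distrib_lattice} itself"
  shows "Q_poly L = pcompose (D_poly L) [:1, 1:]"
  by (simp add: D_poly_eq_sum_monom Q_poly_eq_sum_power pcompose_sum pcompose_monom_1)

theorem corollary9:
  fixes L :: "'a::{finite, distrib_lattice} itself"
  shows "poly (Q_poly L) (-1) = (\<Sum>k\<le>max_antichain_Mi L. (-1)^k * int (q L k)) \<and>
         (\<Sum>k\<le>max_antichain_Mi L. (-1)^k * int (q L k)) = poly (D_poly L) 0 \<and>
         poly (D_poly L) 0 = 1 \<and>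
         poly (pderiv (Q_poly L)) (-1) = poly (pderiv (D_poly L)) 0 \<and>
         poly (pderiv (D_poly L)) 0 = int (d_down L 1) \<and>
         d_down L 1 = card (Mi :: 'a set)"
proof -
  have Q: "Q_poly L = pcompose (D_poly L) [:1, 1:]" by (rule Q_poly_eq_pcompose_D_poly)
  have Q_eval: "poly (Q_poly L) (-1) = (\<Sum>k\<le>max_antichain_Mi L. (-1)^k * int (q L k))"
    unfolding Q_poly_def poly_sum poly_monom by (simp add: mult.commute)
  have Q_D: "poly (Q_poly L) (-1) = poly (D_poly L) 0" unfolding Q by (simp add: poly_pcompose)
  have D_0: "poly (D_poly L) 0 = 1" by (simp add: poly_0_coeff_0 coeff_D_poly d_down_0)
  have "pderiv (Q_poly L) = pcompose (pderiv (D_poly L)) [:1, 1:]"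
    unfolding Q by (simp add: pderiv_pcompose pderiv_pCons)
  then have Q'_D': "poly (pderiv (Q_poly L)) (-1) = poly (pderiv (D_poly L)) 0"
    by (simp add: poly_pcompose)
  have D'_0: "poly (pderiv (D_poly L)) 0 = int (d_down L 1)"
    by (simp add: poly_0_coeff_0 coeff_pderiv coeff_D_poly)
  show ?thesis using Q_eval Q_D D_0 Q'_D' D'_0 d_down_1_eq_card_Mi by simp
qed

end
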